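(* Consider the problem $\min_{w\in W}f(w)$, $f(w)=\mu(w)+\sum_{s\in N}\eta_s(w_{(s)})$, under the assumptions of the context, and additionally assume that the gradient $\mu'$ is uniformly continuous on $W$. Let Method (CPL) (described in the context) be applied with any $z^0\in W$, $\beta,\theta\in(0,1)$ and any sequence $\delta_l>0$ decreasing to $0$. Then: (i) for each outer iteration $l$, the number of inner iterations performed before the restart producing $z^l$ is finite; (ii) the sequence $\{z^l\}$ has limit points, every limit point of $\{z^l\}$ is a solution of $\min_{w\in W}f(w)$, and $\lim_{l\to\infty}f(z^l)=f^*$, where $f^*=\min_{w\in W}f(w)$.
   Context: Let $N=\{1,\dots,n\}$ and $\mathbb{R}^m=\prod_{s\in N}\mathbb{R}^{m_s}$, writing $w=(w_{(s)})_{s\in N}$. Let $W=\prod_{s\in N}W_s$ where each $W_s\subset\mathbb{R}^{m_s}$ is nonempty, convex and compact. Let $\mu:\mathbb{R}^m\to\mathbb{R}$ be convex and continuously differentiable, and each $\eta_s:\mathbb{R}^{m_s}\to\mathbb{R}$ convex; $\eta(w)=\sum_s\eta_s(w_{(s)})$, $f=\mu+\eta$. For $w\in W$ and $s\in N$ define $V_s(w)$ as the solution set of $\min_{v_{(s)}\in W_s}\{\langle v_{(s)},\partial\mu(w)/\partial w_{(s)}\rangle+\eta_s(v_{(s)})\}$ and the partial gap $$\varphi_s(w)=\max_{v_{(s)}\in W_s}\Big\{\Big\langle w_{(s)}-v_{(s)},\frac{\partial\mu(w)}{\partial w_{(s)}}\Big\rangle+\eta_s(w_{(s)})-\eta_s(v_{(s)})\Big\}.$$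 Method (CPL): Choose $z^0\in W$, $\beta,\theta\in(0,1)$, a sequence $\delta_l\searrow 0$; set $l=1$. Step 0: set $k=0$, $d=0$, $s=1$, $w^0=z^{l-1}$. Step 1: find $v_{(s)}\in V_s(w^k)$ and compute $\varphi_s(w^k)$. If $\varphi_s(w^k)\ge\delta_l$, define $p^k$ by $p^k_{(s)}=v_{(s)}-w^k_{(s)}$ and $p^k_{(i)}=0$ for $i\ne s$, and go to Step 4. Step 2: set $d=d+1$. If $d=n$ (i.e. $n$ consecutive components have been checked with gap below $\delta_l$), set $z^l=w^k$, $l=l+1$ and go to Step 0 (restart). Step 3: set $s=1$ if $s=n$, else $s=s+1$; go to Step 1. Step 4: let $j$ be the smallest nonnegative integer with $f(w^k+\theta^jp^k)\le f(w^k)-\beta\theta^j\varphi_s(w^k)$; set $\lambda_k=\theta^j$, $w^{k+1}=w^k+\lambda_kp^k$, $k=k+1$, $d=0$; set $s=1$ if $s=n$, else $s=s+1$; go to Step 1. *)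

theory Defs
  imports "HOL-Analysis.Analysis"
begin

text \<open>The space R^m is modelled as real^'m; its coordinates are partitioned into the
  blocks 1..n by a map blk. The block s component w_(s) is identified with the vector
  bproj blk s w, which agrees with w on the coordinates of block s and is zero elsewhere;
  R^{m_s} is identified with the subspace bsub blk s.\<close>

definition bproj :: "('m::finite \<Rightarrow> nat) \<Rightarrow> nat \<Rightarrow> real^'m \<Rightarrow> real^'m" where
  "bproj blk s w = (\<chi> i. if blk i = s then w $ i else 0)"

definition bsub :: "('m::finite \<Rightarrow> nat) \<Rightarrow> nat \<Rightarrow> (real^'m) set" where
  "bsub blk s = {x. \<forall>i. blk i \<noteq> s \<longrightarrow> x $ i = 0}"

definition prodset :: "('m::finite \<Rightarrow> nat) \<Rightarrow> nat \<Rightarrow> (nat \<Rightarrow> (real^'m) set) \<Rightarrow> (real^'m) set" where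
  "prodset blk n Wb = {w. \<forall>s\<in>{1..n}. bproj blk s w \<in> Wb s}"

definition fobj :: "(real^'m \<Rightarrow> real) \<Rightarrow> (nat \<Rightarrow> real^'m \<Rightarrow> real) \<Rightarrow> ('m::finite \<Rightarrow> nat) \<Rightarrow> nat
    \<Rightarrow> real^'m \<Rightarrow> real" where
  "fobj mu eta blk n w = mu w + (\<Sum>s=1..n. eta s (bproj blk s w))"

definition Vset :: "('m::finite \<Rightarrow> nat) \<Rightarrow> (nat \<Rightarrow> (real^'m) set) \<Rightarrow> (real^'m \<Rightarrow> real^'m)
    \<Rightarrow> (nat \<Rightarrow> real^'m \<Rightarrow> real) \<Rightarrow> nat \<Rightarrow> real^'m \<Rightarrow> (real^'m) set" where
  "Vset blk Wb mu' eta s w =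
     {v \<in> Wb s. \<forall>u \<in> Wb s. inner v (bproj blk s (mu' w)) + eta s v
                            \<le> inner u (bproj blk s (mu' w)) + eta s u}"

text \<open>partial gap phi_s(w) (the max is attained; written as a supremum)\<close>
definition gap :: "('m::finite \<Rightarrow> nat) \<Rightarrow> (nat \<Rightarrow> (real^'m) set) \<Rightarrow> (real^'m \<Rightarrow> real^'m)
    \<Rightarrow> (nat \<Rightarrow> real^'m \<Rightarrow> real) \<Rightarrow> nat \<Rightarrow> real^'m \<Rightarrow> real" where
  "gap blk Wb mu' eta s w =
     (SUP v \<in> Wb s. inner (bproj blk s w - v) (bproj blk s (mu' w))
                     + eta s (bproj blk s w) - eta s v)"

definition nxt :: "nat \<Rightarrow> nat \<Rightarrow> nat" where
  "nxt n s = (if s = n then 1 else s + 1)"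

text \<open>One execution of Step 1 of (CPL) together with the subsequent Step 2/3 or Step 4
  (and, on restart, Step 0). A state is (l, w, s, d): outer index l, current point w^k,
  current block s, counter d. The only freedom is the choice of v in V_s(w).\<close>
definition cpl_step ::
  "(real^'m \<Rightarrow> real) \<Rightarrow> (real^'m \<Rightarrow> real^'m) \<Rightarrow> (nat \<Rightarrow> real^'m \<Rightarrow> real) \<Rightarrow> ('m::finite \<Rightarrow> nat)
   \<Rightarrow> nat \<Rightarrow> (nat \<Rightarrow> (real^'m) set) \<Rightarrow> real \<Rightarrow> real \<Rightarrow> (nat \<Rightarrow> real)
   \<Rightarrow> nat \<times> (real^'m) \<times> nat \<times> nat \<Rightarrow> nat \<times> (real^'m) \<times> nat \<times> nat \<Rightarrow> bool" where
  "cpl_step mu mu' eta blk n Wb \<beta> \<theta> \<delta> \<sigma> \<sigma>' =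
    (case \<sigma> of (l, w, s, d) \<Rightarrow>
      (\<exists>v \<in> Vset blk Wb mu' eta s w.
        (let \<phi> = gap blk Wb mu' eta s w; f = fobj mu eta blk n in
         if \<phi> \<ge> \<delta> l then
           (let p = v - bproj blk s w;
                j = (LEAST j::nat. f (w + (\<theta> ^ j) *\<^sub>R p) \<le> f w - \<beta> * \<theta> ^ j * \<phi>)
            in \<sigma>' = (l, w + (\<theta> ^ j) *\<^sub>R p, nxt n s, 0))
         else if d + 1 = n then \<sigma>' = (l + 1, w, 1, 0)
         else \<sigma>' = (l, w, nxt n s, d + 1))))"

text \<open>z^l: the point at which outer iteration l+1 starts (z^0 is the initial point).\<close>
definition cpl_z :: "(nat \<Rightarrow> nat \<times> (real^'m) \<times> nat \<times> nat) \<Rightarrow> nat \<Rightarrow> real^'m" where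
  "cpl_z st l = fst (snd (st (LEAST t. fst (st t) = Suc l)))"

end

theory Submission
  imports Defs
begin

(* A block step with partial gap at least delta_l lowers f by at least beta theta^J delta_l, where
   J depends on delta_l only: uniform continuity of mu' on the compact set W yields one Armijo step
   that is accepted at all such points. Since f is bounded below on W, each level sees only
   finitely many descent steps, and between two of them the counter d increases; hence after
   finitely many steps all n partial gaps at the current point are below delta_l and the method
   restarts. The gradient inequality for mu together with the minimality of the block solutions
   gives f(z^l) - f(y) <= sum_s phi_s(z^l) < n delta_l for all y in W, so f(z^l) tends to the
   minimum, and by compactness and continuity every limit point of (z^l) is a minimizer. *)

definition cyclic_pred :: "nat \<Rightarrow> nat \<Rightarrow> nat \<Rightarrow> nat" where
  "cyclic_pred n s k = (s - 1 + n - k) mod n + 1"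

lemma cyclic_pred_0: "s \<in> {1..n} \<Longrightarrow> cyclic_pred n s 0 = s"
  by (cases s) (auto simp: cyclic_pred_def)

lemma cyclic_pred_nxt:
  assumes "s \<in> {1..n}" "k \<in> {1..n}"
  shows "cyclic_pred n (nxt n s) k = cyclic_pred n s (k - 1)"
proof (cases "s = n")
  case True
  have "(n - k) mod n = (n + (n - k)) mod n" by simp
  with True assms show ?thesis by (simp add: cyclic_pred_def nxt_def)
qed (use assms in \<open>simp add: cyclic_pred_def nxt_def\<close>)

lemma cyclic_pred_surj:
  assumes "s \<in> {1..n}" "r \<in> {1..n}"
  shows "\<exists>k<n. cyclic_pred n s k = r"
proof (cases "r \<le> s")
  case True
  have "cyclic_pred n s (s - r) = r"
    using assms True by (cases r) (auto simp: cyclic_pred_def)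
  with assms True show ?thesis by (intro exI[of _ "s - r"]) auto
next
  case False
  have "cyclic_pred n s (s + n - r) = r" using assms False by (simp add: cyclic_pred_def)
  with assms False show ?thesis by (intro exI[of _ "s + n - r"]) auto
qed

lemma linear_bproj: "linear (bproj blk s)"
  by (rule linearI) (simp_all add: bproj_def vec_eq_iff algebra_simps)

lemma bproj_in_bsub: "bproj blk s w \<in> bsub blk s"
  by (simp add: bproj_def bsub_def)

lemma bproj_bsub_self: "x \<in> bsub blk s \<Longrightarrow> bproj blk s x = x"
  by (simp add: bproj_def bsub_def vec_eq_iff)

lemma bproj_bsub_other: "x \<in> bsub blk s' \<Longrightarrow> s \<noteq> s' \<Longrightarrow> bproj blk s x = 0"
  by (auto simp: bproj_def bsub_def vec_eq_iff)

lemma bsub_diff: "x \<in> bsub blk s \<Longrightarrow> y \<in> bsub blk s \<Longrightarrow> x - y \<in> bsub blk s"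
  by (simp add: bsub_def)

lemma inner_bsub_right: "p \<in> bsub blk s \<Longrightarrow> inner a p = inner (bproj blk s a) p"
  by (auto simp: inner_vec_def bsub_def bproj_def intro!: sum.cong)

lemma inner_eq_sum_bproj:
  assumes "\<forall>i. blk i \<in> {1..n}"
  shows "inner a b = (\<Sum>s=1..n. inner (bproj blk s a) (bproj blk s b))"
proof -
  have "(\<Sum>s=1..n. inner (bproj blk s a) (bproj blk s b))
      = (\<Sum>i\<in>UNIV. \<Sum>s=1..n. if blk i = s then a $ i * b $ i else 0)"
    by (subst sum.swap) (auto simp: inner_vec_def bproj_def intro!: sum.cong)
  also have "\<dots> = (\<Sum>i\<in>UNIV. a $ i * b $ i)"
    using assms by (auto intro!: sum.cong simp: sum.delta)
  finally show ?thesis by (simp add: inner_vec_def)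
qed

lemma vec_eq_sum_bproj:
  assumes "\<forall>i. blk i \<in> {1..n}"
  shows "w = (\<Sum>s=1..n. bproj blk s w)"
  using assms by (auto simp: vec_eq_iff bproj_def sum_component if_distrib sum.delta cong: if_cong)

lemma convex_on_above_gradient:
  fixes g :: "'a::real_inner \<Rightarrow> real"
  assumes "convex_on UNIV g" and "(g has_derivative (\<lambda>h. inner g' h)) (at x)"
  shows "g x + inner g' (y - x) \<le> g y"
proof -
  define h where "h = (\<lambda>t::real. g (x + t *\<^sub>R (y - x)))"
  have "convex_on UNIV h"
  proof (rule convex_onI)
    fix t a b :: real assume "0 < t" "t < 1"
    have "x + ((1 - t) * a + t * b) *\<^sub>R (y - x)
        = (1 - t) *\<^sub>R (x + a *\<^sub>R (y - x)) + t *\<^sub>R (x + b *\<^sub>R (y - x))"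
      by (simp add: algebra_simps)
    then show "h ((1 - t) *\<^sub>R a + t *\<^sub>R b) \<le> (1 - t) * h a + t * h b"
      unfolding h_def using convex_onD[OF assms(1), of t] \<open>0 < t\<close> \<open>t < 1\<close> by simp
  qed simp
  have "((\<lambda>t. x + t *\<^sub>R (y - x)) has_derivative (\<lambda>t. t *\<^sub>R (y - x))) (at 0)"
    by (auto intro!: derivative_eq_intros)
  moreover have "(g has_derivative (\<lambda>h. inner g' h)) (at (x + 0 *\<^sub>R (y - x)))"
    using assms(2) by simp
  ultimately have "(h has_derivative (\<lambda>t. inner g' (t *\<^sub>R (y - x)))) (at 0)"
    unfolding h_def by (rule has_derivative_compose)
  then have "(h has_field_derivative inner g' (y - x)) (at 0)"
    by (simp add: has_field_derivative_def inner_scaleR_right mult.commute[of _ "inner g' (y - x)"])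
  from convex_on_imp_above_tangent[OF \<open>convex_on UNIV h\<close> _ _ _ this, of 1]
  show ?thesis by (simp add: h_def)
qed

lemma convex_on_compose_linear:
  assumes "convex_on T g" "linear h" "range h \<subseteq> T"
  shows "convex_on UNIV (\<lambda>x. g (h x))"
proof (rule convex_onI)
  fix t :: real and x y assume "0 < t" "t < 1"
  then show "g (h ((1 - t) *\<^sub>R x + t *\<^sub>R y)) \<le> (1 - t) * g (h x) + t * g (h y)"
    using convex_onD[OF assms(1), of t "h x" "h y"] assms(3)
    by (simp add: linear_add[OF assms(2)] linear_scale[OF assms(2)] image_subset_iff)
qed simp

locale block_problem =
  fixes mu :: "real^'m::finite \<Rightarrow> real" and mu' :: "real^'m \<Rightarrow> real^'m"
    and eta :: "nat \<Rightarrow> real^'m \<Rightarrow> real" and blk :: "'m \<Rightarrow> nat" and n :: nat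
    and Wb :: "nat \<Rightarrow> (real^'m) set"
  assumes blk: "\<forall>i. blk i \<in> {1..n}"
    and Wb: "\<forall>s\<in>{1..n}. Wb s \<noteq> {} \<and> convex (Wb s) \<and> compact (Wb s) \<and> Wb s \<subseteq> bsub blk s"
    and mu_convex: "convex_on UNIV mu"
    and mu_grad: "\<forall>w. (mu has_derivative (\<lambda>h. inner (mu' w) h)) (at w)"
    and eta_convex: "\<forall>s\<in>{1..n}. convex_on (bsub blk s) (eta s)"
    and mu'_unif: "uniformly_continuous_on (prodset blk n Wb) mu'"
begin

abbreviation "W \<equiv> prodset blk n Wb"
abbreviation "f \<equiv> fobj mu eta blk n"
abbreviation "bp \<equiv> bproj blk"
abbreviation "gp \<equiv> gap blk Wb mu' eta"
abbreviation "V \<equiv> Vset blk Wb mu' eta"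

lemma eta_bproj_continuous: "s \<in> {1..n} \<Longrightarrow> continuous_on UNIV (\<lambda>w. eta s (bp s w))"
  using eta_convex bproj_in_bsub
  by (intro convex_on_continuous convex_on_compose_linear[OF _ linear_bproj]) auto

lemma f_continuous: "continuous_on UNIV f"
proof -
  have "continuous_on UNIV mu"
    using mu_grad has_derivative_continuous continuous_at_imp_continuous_on by blast
  then show ?thesis
    unfolding fobj_def[abs_def] using eta_bproj_continuous
    by (intro continuous_on_add continuous_on_sum) auto
qed

lemma W_compact: "compact W"
unfolding compact_eq_bounded_closed
proof
  have "W = (\<Inter>s\<in>{1..n}. bp s -` Wb s)" by (auto simp: prodset_def)
  moreover have "closed (bp s -` Wb s)" if "s \<in> {1..n}" for s
  proof -
    have "continuous_on UNIV (bp s)"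
      by (intro linear_continuous_on) (simp add: linear_linear linear_bproj)
    then show ?thesis using Wb that compact_imp_closed by (metis closed_vimage)
  qed
  ultimately show "closed W" by auto
next
  have "\<exists>B. \<forall>x\<in>Wb s. norm x \<le> B" if "s \<in> {1..n}" for s
    using Wb that compact_imp_bounded bounded_iff by metis
  then obtain B where B: "\<And>s x. s \<in> {1..n} \<Longrightarrow> x \<in> Wb s \<Longrightarrow> norm x \<le> B s"
    by metis
  have "norm w \<le> (\<Sum>s=1..n. B s)" if "w \<in> W" for w
  proof -
    have "norm w \<le> (\<Sum>s=1..n. norm (bp s w))"
      using vec_eq_sum_bproj[OF blk, of w] norm_sum by metis
    also have "\<dots> \<le> (\<Sum>s=1..n. B s)"
      using that B by (intro sum_mono) (auto simp: prodset_def)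
    finally show ?thesis .
  qed
  then show "bounded W" unfolding bounded_iff by blast
qed

lemma block_segment_in_W:
  assumes w: "w \<in> W" and s: "s \<in> {1..n}" and v: "v \<in> Wb s" and t: "0 \<le> t" "t \<le> 1"
  shows "w + t *\<^sub>R (v - bp s w) \<in> W"
  unfolding prodset_def
proof safe
  fix s' assume s': "s' \<in> {1..n}"
  have p: "v - bp s w \<in> bsub blk s" using Wb s v by (intro bsub_diff bproj_in_bsub) auto
  show "bp s' (w + t *\<^sub>R (v - bp s w)) \<in> Wb s'"
  proof (cases "s' = s")
    case True
    have "bp s (w + t *\<^sub>R (v - bp s w)) = bp s w + t *\<^sub>R (v - bp s w)"
      by (simp only: linear_add[OF linear_bproj] linear_scale[OF linear_bproj]
          bproj_bsub_self[OF p])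
    also have "\<dots> = (1 - t) *\<^sub>R bp s w + t *\<^sub>R v" by (simp add: algebra_simps)
    also have "\<dots> \<in> Wb s" using Wb s w v t by (intro convexD) (auto simp: prodset_def)
    finally show ?thesis using True by simp
  next
    case False
    then show ?thesis using w s' p
      by (simp add: linear_add[OF linear_bproj] linear_scale[OF linear_bproj]
          bproj_bsub_other prodset_def)
  qed
qed

lemma Vset_nonempty:
  assumes s: "s \<in> {1..n}"
  shows "V s w \<noteq> {}"
proof -
  let ?c = "bp s (mu' w)"
  have "continuous_on UNIV (\<lambda>u. inner u ?c + eta s (bp s u))"
    by (intro continuous_on_add continuous_intros eta_bproj_continuous[OF s])
  then have c: "continuous_on (Wb s) (\<lambda>u. inner u ?c + eta s (bp s u))"
    by (rule continuous_on_subset) simp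
  have "eta s (bp s u) = eta s u" if "u \<in> Wb s" for u
    using Wb s that bproj_bsub_self by (metis subsetD)
  then have "continuous_on (Wb s) (\<lambda>u. inner u ?c + eta s u)"
    by (intro continuous_on_eq[OF c]) simp
  from continuous_attains_inf[OF _ _ this] Wb s obtain v where "v \<in> Wb s"
    "\<forall>u\<in>Wb s. inner v ?c + eta s v \<le> inner u ?c + eta s u" by auto
  then show ?thesis unfolding Vset_def by auto
qed

lemma gap_eq_at_minimizer:
  assumes "v \<in> V s w"
  shows "gp s w = inner (bp s w - v) (bp s (mu' w)) + eta s (bp s w) - eta s v"
  unfolding gap_def using assms
  by (intro cSup_eq_maximum) (auto simp: Vset_def inner_diff_left)

lemma block_value_le_gap:
  assumes "s \<in> {1..n}" "u \<in> Wb s"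
  shows "inner (bp s w - u) (bp s (mu' w)) + eta s (bp s w) - eta s u \<le> gp s w"
proof -
  obtain v where v: "v \<in> V s w" using Vset_nonempty[OF assms(1)] by blast
  then show ?thesis
    using assms(2) unfolding gap_eq_at_minimizer[OF v] by (auto simp: Vset_def inner_diff_left)
qed

lemma f_sub_le_sum_gap:
  assumes w: "w \<in> W" and y: "y \<in> W"
  shows "f w - f y \<le> (\<Sum>s=1..n. gp s w)"
proof -
  have "inner (mu' w) (w - y) = (\<Sum>s=1..n. inner (bp s w - bp s y) (bp s (mu' w)))"
    by (subst inner_eq_sum_bproj[OF blk]) (simp add: linear_diff[OF linear_bproj] inner_commute)
  moreover have "mu w - mu y \<le> inner (mu' w) (w - y)"
    using convex_on_above_gradient[OF mu_convex mu_grad[rule_format], of w y]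
    by (simp add: inner_diff_right)
  ultimately have "f w - f y
      \<le> (\<Sum>s=1..n. inner (bp s w - bp s y) (bp s (mu' w)) + eta s (bp s w) - eta s (bp s y))"
    by (simp add: fobj_def sum.distrib sum_subtractf)
  also have "\<dots> \<le> (\<Sum>s=1..n. gp s w)"
    using y by (intro sum_mono block_value_le_gap) (auto simp: prodset_def)
  finally show ?thesis .
qed

lemma f_block_update:
  assumes s: "s \<in> {1..n}" and x: "x \<in> bsub blk s"
  shows "f (w + x) - f w = mu (w + x) - mu w + eta s (bp s (w + x)) - eta s (bp s w)"
proof -
  have "bp s' (w + x) = bp s' w" if "s' \<noteq> s" for s'
    using that x by (simp add: linear_add[OF linear_bproj] bproj_bsub_other)
  then have "(\<Sum>s'=1..n. eta s' (bp s' (w + x)) - eta s' (bp s' w))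
      = eta s (bp s (w + x)) - eta s (bp s w)"
    using s by (subst sum.remove[of _ s]) auto
  then show ?thesis by (simp add: fobj_def sum_subtractf)
qed

lemma block_step_decrease:
  assumes w: "w \<in> W" and s: "s \<in> {1..n}" and v: "v \<in> V s w" and t: "0 \<le> t" "t \<le> 1"
    and p: "p = v - bp s w"
  shows "f (w + t *\<^sub>R p) \<le> f w - t * gp s w + t * inner (mu' (w + t *\<^sub>R p) - mu' w) p"
proof -
  have vb: "v \<in> bsub blk s" using Wb s v by (auto simp: Vset_def)
  have pb: "p \<in> bsub blk s" unfolding p by (intro bsub_diff vb bproj_in_bsub)
  have "mu (w + t *\<^sub>R p) - mu w \<le> inner (mu' (w + t *\<^sub>R p)) (t *\<^sub>R p)"
    using convex_on_above_gradient[OF mu_convex mu_grad[rule_format], of "w + t *\<^sub>R p" w]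
    by (simp add: inner_minus_right)
  also have "\<dots> = t * inner (mu' w) p + t * inner (mu' (w + t *\<^sub>R p) - mu' w) p"
    by (simp add: inner_diff_left algebra_simps)
  finally have mu_le: "mu (w + t *\<^sub>R p) - mu w
      \<le> t * inner (mu' w) p + t * inner (mu' (w + t *\<^sub>R p) - mu' w) p" .
  have "bp s (w + t *\<^sub>R p) = bp s w + t *\<^sub>R p"
    by (simp only: linear_add[OF linear_bproj] linear_scale[OF linear_bproj] bproj_bsub_self[OF pb])
  also have "\<dots> = (1 - t) *\<^sub>R bp s w + t *\<^sub>R v" by (simp add: p algebra_simps)
  finally have eta_le: "eta s (bp s (w + t *\<^sub>R p)) \<le> (1 - t) * eta s (bp s w) + t * eta s v"
    using convex_onD[OF eta_convex[rule_format, OF s], of t "bp s w" v] t vb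
    by (simp add: bproj_in_bsub)
  have "inner (mu' w) p = inner p (bp s (mu' w))"
    using inner_bsub_right[OF pb, of "mu' w"] by (simp add: inner_commute)
  then have gp: "gp s w = - inner (mu' w) p + eta s (bp s w) - eta s v"
    using gap_eq_at_minimizer[OF v] by (simp add: p inner_diff_left)
  have "t *\<^sub>R p \<in> bsub blk s" using pb by (simp add: bsub_def)
  then have "f (w + t *\<^sub>R p) - f w
      = mu (w + t *\<^sub>R p) - mu w + eta s (bp s (w + t *\<^sub>R p)) - eta s (bp s w)"
    by (rule f_block_update[OF s])
  also have "\<dots> \<le> t * inner (mu' w) p + t * inner (mu' (w + t *\<^sub>R p) - mu' w) p
      + t * (eta s v - eta s (bp s w))"
    using mu_le eta_le by (simp add: algebra_simps)
  also have "\<dots> = - t * gp s w + t * inner (mu' (w + t *\<^sub>R p) - mu' w) p"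
    unfolding gp by (simp add: algebra_simps)
  finally show ?thesis by simp
qed

lemma armijo_uniform_step:
  assumes \<beta>: "\<beta> < 1" and d0: "0 < d0"
  obtains t1 where "0 < t1"
    "\<And>w s v t. w \<in> W \<Longrightarrow> s \<in> {1..n} \<Longrightarrow> v \<in> V s w \<Longrightarrow> 0 < t \<Longrightarrow> t \<le> 1 \<Longrightarrow> t < t1
      \<Longrightarrow> d0 \<le> gp s w \<Longrightarrow> f (w + t *\<^sub>R (v - bp s w)) \<le> f w - \<beta> * t * gp s w"
proof -
  define D where "D = diameter W + 1"
  have W: "bounded W" using W_compact compact_imp_bounded by blast
  then have D: "0 < D" using diameter_ge_0[of W] by (simp add: D_def)
  define e where "e = (1 - \<beta>) * d0 / D"
  have e: "0 < e" using \<beta> d0 D by (simp add: e_def)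
  obtain d where d: "0 < d"
    "\<And>x x'. x \<in> W \<Longrightarrow> x' \<in> W \<Longrightarrow> dist x' x < d \<Longrightarrow> dist (mu' x') (mu' x) < e"
    using mu'_unif[unfolded uniformly_continuous_on_def, rule_format, OF e] by metis
  show thesis
  proof (rule that[of "d / D"])
    show "0 < d / D" using d D by simp
    fix w s v t assume w: "w \<in> W" and s: "s \<in> {1..n}" and v: "v \<in> V s w"
      and t: "0 < t" "t \<le> 1" "t < d / D" and gap: "d0 \<le> gp s w"
    define p where "p = v - bp s w"
    have vW: "v \<in> Wb s" using v by (simp add: Vset_def)
    have "norm p = dist (w + p) w" by (simp add: dist_norm)
    also have "\<dots> \<le> diameter W"
      using diameter_bounded_bound[OF W block_segment_in_W[OF w s vW, of 1] w] by (simp add: p_def)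
    finally have np: "norm p \<le> D" by (simp add: D_def)
    have "dist (w + t *\<^sub>R p) w \<le> t * D" using np t by (simp add: dist_norm mult_left_mono)
    also have "\<dots> < d" using t D by (simp add: pos_less_divide_eq)
    finally have "norm (mu' (w + t *\<^sub>R p) - mu' w) \<le> e"
      using d(2)[OF w block_segment_in_W[OF w s vW, of t]] t by (simp add: p_def dist_norm)
    then have "norm (mu' (w + t *\<^sub>R p) - mu' w) * norm p \<le> e * D"
      using np e by (intro mult_mono) auto
    then have "inner (mu' (w + t *\<^sub>R p) - mu' w) p \<le> e * D"
      by (meson norm_cauchy_schwarz order_trans)
    also have "\<dots> \<le> (1 - \<beta>) * gp s w" using D gap \<beta> by (simp add: e_def)
    finally have "t * inner (mu' (w + t *\<^sub>R p) - mu' w) p \<le> t * ((1 - \<beta>) * gp s w)"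
      using t by (simp add: mult_left_mono)
    with block_step_decrease[OF w s v _ t(2) p_def] t
    show "f (w + t *\<^sub>R (v - bp s w)) \<le> f w - \<beta> * t * gp s w"
      by (simp add: p_def algebra_simps)
  qed
qed

definition armijo_exponent :: "real \<Rightarrow> real \<Rightarrow> real \<Rightarrow> nat \<Rightarrow> bool" where
  "armijo_exponent \<beta> \<theta> d0 J \<longleftrightarrow> (\<forall>w\<in>W. \<forall>s\<in>{1..n}. \<forall>v\<in>V s w. d0 \<le> gp s w \<longrightarrow>
     f (w + (\<theta> ^ J) *\<^sub>R (v - bp s w)) \<le> f w - \<beta> * \<theta> ^ J * gp s w)"

lemma armijo_exponent_exists:
  assumes "\<beta> < 1" "0 < \<theta>" "\<theta> < 1" "0 < d0"
  shows "\<exists>J. armijo_exponent \<beta> \<theta> d0 J"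
proof -
  obtain t1 where t1: "0 < t1" and step: "\<And>w s v t. w \<in> W \<Longrightarrow> s \<in> {1..n} \<Longrightarrow> v \<in> V s w
      \<Longrightarrow> 0 < t \<Longrightarrow> t \<le> 1 \<Longrightarrow> t < t1 \<Longrightarrow> d0 \<le> gp s w
      \<Longrightarrow> f (w + t *\<^sub>R (v - bp s w)) \<le> f w - \<beta> * t * gp s w"
    using armijo_uniform_step assms by metis
  obtain J where "\<theta> ^ J < t1" using real_arch_pow_inv[OF t1 assms(3)] by blast
  moreover have "0 < \<theta> ^ J" "\<theta> ^ J \<le> 1" using assms by (auto simp: power_le_one)
  ultimately show ?thesis unfolding armijo_exponent_def by (blast intro: step)
qed

lemma cpl_step_cases:
  assumes "cpl_step mu mu' eta blk n Wb \<beta> \<theta> \<delta> (l, w, s, d) \<sigma>'"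
  obtains v where "v \<in> V s w" "\<delta> l \<le> gp s w"
      "\<sigma>' = (l, w + (\<theta> ^ (LEAST j. f (w + (\<theta> ^ j) *\<^sub>R (v - bp s w)) \<le> f w - \<beta> * \<theta> ^ j * gp s w))
                *\<^sub>R (v - bp s w), nxt n s, 0)"
  | "gp s w < \<delta> l" "d + 1 = n" "\<sigma>' = (Suc l, w, 1, 0)"
  | "gp s w < \<delta> l" "d + 1 \<noteq> n" "\<sigma>' = (l, w, nxt n s, Suc d)"
  using assms unfolding cpl_step_def Let_def by (auto split: if_split_asm intro: that)

end

lemma incseq_bounded_nat_stabilizes:
  fixes X :: "nat \<Rightarrow> nat"
  assumes "incseq X" "\<And>t. X t \<le> b"
  obtains T where "\<And>t. T \<le> t \<Longrightarrow> X t = X T"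
proof -
  have "range X \<subseteq> {..b}" using assms(2) by auto
  then have fin: "finite (range X)" by (rule finite_subset) simp
  obtain T where T: "Max (range X) = X T" using Max_in[OF fin] by blast
  have "X t = X T" if "T \<le> t" for t
    using Max_ge[OF fin, of "X t"] assms(1) that unfolding T incseq_def by (meson le_antisym rangeI)
  then show thesis by (rule that)
qed

locale cpl_run = block_problem +
  fixes \<beta> \<theta> :: real and \<delta> :: "nat \<Rightarrow> real"
    and z0 and st
  assumes \<beta>: "0 < \<beta>" "\<beta> < 1" and \<theta>: "0 < \<theta>" "\<theta> < 1"
    and \<delta>: "\<forall>l. 0 < \<delta> l" "\<delta> \<longlonglongrightarrow> 0"
    and z0: "z0 \<in> prodset blk n Wb"
    and run0: "st 0 = (1, z0, 1, 0)"
    and run: "\<forall>t. cpl_step mu mu' eta blk n Wb \<beta> \<theta> \<delta> (st t) (st (Suc t))"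
begin

abbreviation "lev t \<equiv> fst (st t)"
abbreviation "pt t \<equiv> fst (snd (st t))"
abbreviation "cur t \<equiv> fst (snd (snd (st t)))"
abbreviation "cnt t \<equiv> snd (snd (snd (st t)))"

lemma run_step: "cpl_step mu mu' eta blk n Wb \<beta> \<theta> \<delta> (lev t, pt t, cur t, cnt t) (st (Suc t))"
  using run by simp

lemma step_descent:
  assumes w: "pt t \<in> W" and s: "cur t \<in> {1..n}" and gap: "\<delta> (lev t) \<le> gp (cur t) (pt t)"
  shows "lev (Suc t) = lev t" "pt (Suc t) \<in> W" "cur (Suc t) = nxt n (cur t)" "cnt (Suc t) = 0"
    and "armijo_exponent \<beta> \<theta> (\<delta> (lev t)) J
      \<Longrightarrow> f (pt (Suc t)) \<le> f (pt t) - \<beta> * \<theta> ^ J * \<delta> (lev t)"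
proof -
  obtain v where v: "v \<in> V (cur t) (pt t)"
    and next_st: "st (Suc t) = (lev t, pt t + (\<theta> ^ (LEAST j. f (pt t + (\<theta> ^ j) *\<^sub>R (v - bp (cur t) (pt t)))
          \<le> f (pt t) - \<beta> * \<theta> ^ j * gp (cur t) (pt t))) *\<^sub>R (v - bp (cur t) (pt t)), nxt n (cur t), 0)"
    by (rule cpl_step_cases[OF run_step]) (use gap that in auto)
  define P where "P = (\<lambda>j. f (pt t + (\<theta> ^ j) *\<^sub>R (v - bp (cur t) (pt t)))
      \<le> f (pt t) - \<beta> * \<theta> ^ j * gp (cur t) (pt t))"
  have next_pt: "pt (Suc t) = pt t + (\<theta> ^ Least P) *\<^sub>R (v - bp (cur t) (pt t))"
    using next_st by (simp add: P_def)
  show "lev (Suc t) = lev t" "cur (Suc t) = nxt n (cur t)" "cnt (Suc t) = 0" using next_st by simp_all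
  have vW: "v \<in> Wb (cur t)" using v by (simp add: Vset_def)
  show "pt (Suc t) \<in> W"
    unfolding next_pt using \<theta> by (intro block_segment_in_W[OF w s vW]) (auto simp: power_le_one)
  assume "armijo_exponent \<beta> \<theta> (\<delta> (lev t)) J"
  then have "P J" using w s v gap by (auto simp: armijo_exponent_def P_def)
  then have "P (Least P)" "\<theta> ^ J \<le> \<theta> ^ Least P"
    using \<theta> by (auto intro: LeastI Least_le power_decreasing)
  moreover have "\<beta> * \<theta> ^ J * \<delta> (lev t) \<le> \<beta> * \<theta> ^ Least P * gp (cur t) (pt t)"
    using calculation(2) gap \<beta> \<theta> \<delta>(1) by (intro mult_mono) (auto simp: less_imp_le)
  ultimately show "f (pt (Suc t)) \<le> f (pt t) - \<beta> * \<theta> ^ J * \<delta> (lev t)"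
    unfolding next_pt P_def by linarith
qed

lemma step_small_gap:
  assumes "gp (cur t) (pt t) < \<delta> (lev t)"
  shows "pt (Suc t) = pt t"
    and "cnt t + 1 = n \<Longrightarrow> lev (Suc t) = Suc (lev t) \<and> cur (Suc t) = 1 \<and> cnt (Suc t) = 0"
    and "cnt t + 1 \<noteq> n
      \<Longrightarrow> lev (Suc t) = lev t \<and> cur (Suc t) = nxt n (cur t) \<and> cnt (Suc t) = Suc (cnt t)"
proof -
  have "st (Suc t) = (if cnt t + 1 = n then (Suc (lev t), pt t, 1, 0)
      else (lev t, pt t, nxt n (cur t), Suc (cnt t)))"
    by (rule cpl_step_cases[OF run_step]) (use assms in auto)
  then show "pt (Suc t) = pt t"
    and "cnt t + 1 = n \<Longrightarrow> lev (Suc t) = Suc (lev t) \<and> cur (Suc t) = 1 \<and> cnt (Suc t) = 0"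
    and "cnt t + 1 \<noteq> n
      \<Longrightarrow> lev (Suc t) = lev t \<and> cur (Suc t) = nxt n (cur t) \<and> cnt (Suc t) = Suc (cnt t)"
    by simp_all
qed

text \<open>The counter records how many blocks preceding the current one in cyclic order were
  found with a gap below the current tolerance, at the current point.\<close>

lemma run_invariant:
  "1 \<le> lev t \<and> pt t \<in> W \<and> cur t \<in> {1..n} \<and> cnt t < n
    \<and> (\<forall>k\<in>{1..cnt t}. gp (cyclic_pred n (cur t) k) (pt t) < \<delta> (lev t))"
proof (induction t)
  case 0
  then show ?case using run0 z0 blk by auto
next
  case (Suc t)
  then have I: "1 \<le> lev t" "pt t \<in> W" "cur t \<in> {1..n}" "cnt t < n"
    "\<And>k. k \<in> {1..cnt t} \<Longrightarrow> gp (cyclic_pred n (cur t) k) (pt t) < \<delta> (lev t)" by auto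
  have nxt: "nxt n (cur t) \<in> {1..n}" using I(3) by (auto simp: nxt_def)
  show ?case
  proof (cases "\<delta> (lev t) \<le> gp (cur t) (pt t)")
    case True
    with step_descent[OF I(2,3)] I nxt show ?thesis by simp
  next
    case False
    then have small: "gp (cur t) (pt t) < \<delta> (lev t)" by simp
    show ?thesis
    proof (cases "cnt t + 1 = n")
      case True
      with step_small_gap[OF small] I show ?thesis by auto
    next
      case False
      note next_st = step_small_gap(1)[OF small] step_small_gap(3)[OF small False]
      have "gp (cyclic_pred n (cur (Suc t)) k) (pt (Suc t)) < \<delta> (lev (Suc t))"
        if k: "k \<in> {1..cnt (Suc t)}" for k
      proof -
        have shift: "cyclic_pred n (cur (Suc t)) k = cyclic_pred n (cur t) (k - 1)"
          using next_st k I by (simp add: cyclic_pred_nxt)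
        show ?thesis
        proof (cases "k = 1")
          case True
          then show ?thesis using shift next_st small cyclic_pred_0[OF I(3)] by simp
        next
          case False
          then have "k - 1 \<in> {1..cnt t}" using k next_st by auto
          then show ?thesis using shift next_st I(5) by simp
        qed
      qed
      with next_st I nxt False show ?thesis by auto
    qed
  qed
qed

lemma pt_in_W: "pt t \<in> W"
  using run_invariant by blast

lemma cur_in_blocks: "cur t \<in> {1..n}"
  using run_invariant by blast

lemma restart_step:
  assumes "lev (Suc t) \<noteq> lev t"
  shows "lev (Suc t) = Suc (lev t)" "pt (Suc t) = pt t" "\<forall>r\<in>{1..n}. gp r (pt t) < \<delta> (lev t)"
proof -
  have small: "gp (cur t) (pt t) < \<delta> (lev t)"
    using step_descent(1)[OF pt_in_W cur_in_blocks] assms by force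
  then have full: "cnt t + 1 = n" using step_small_gap(3) assms by blast
  with step_small_gap[OF small]
  show "lev (Suc t) = Suc (lev t)" "pt (Suc t) = pt t" by simp_all
  show "\<forall>r\<in>{1..n}. gp r (pt t) < \<delta> (lev t)"
  proof
    fix r assume r: "r \<in> {1..n}"
    obtain k where k: "k < n" "cyclic_pred n (cur t) k = r"
      using cyclic_pred_surj[OF cur_in_blocks r] by blast
    show "gp r (pt t) < \<delta> (lev t)"
    proof (cases "k = 0")
      case True
      then show ?thesis using k small cyclic_pred_0[OF cur_in_blocks] by simp
    next
      case False
      then show ?thesis using k full run_invariant[of t] by auto
    qed
  qed
qed

lemma lev_Suc: "lev t \<le> lev (Suc t)" "lev (Suc t) \<le> Suc (lev t)"
  using restart_step(1)[of t] by (cases "lev (Suc t) = lev t"; simp)+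

lemma f_pt_antimono:
  assumes "i \<le> j"
  shows "f (pt j) \<le> f (pt i)"
proof -
  have "f (pt (Suc t)) \<le> f (pt t)" for t
  proof (cases "\<delta> (lev t) \<le> gp (cur t) (pt t)")
    case True
    obtain J where "armijo_exponent \<beta> \<theta> (\<delta> (lev t)) J"
      using armijo_exponent_exists \<beta> \<theta> \<delta>(1) by blast
    moreover have "0 \<le> \<beta> * \<theta> ^ J * \<delta> (lev t)" using \<beta> \<theta> \<delta>(1) by (simp add: less_imp_le)
    ultimately show ?thesis using step_descent(5)[OF pt_in_W cur_in_blocks True] by force
  qed (simp add: step_small_gap(1))
  then have "decseq (\<lambda>t. f (pt t))" by (rule decseq_SucI)
  then show ?thesis using assms by (simp add: decseq_def)
qed

lemma f_attains_min: "\<exists>m\<in>W. \<forall>x\<in>W. f m \<le> f x"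
  using continuous_attains_inf[OF W_compact _ continuous_on_subset[OF f_continuous]] z0 by blast

text \<open>At a fixed level, n consecutive steps contain a descent step: otherwise the counter
  would reach n.\<close>

lemma descent_within_level:
  assumes same: "\<forall>i\<le>n. lev (t + i) = lev t" and J: "armijo_exponent \<beta> \<theta> (\<delta> (lev t)) J"
  shows "f (pt (t + n)) \<le> f (pt t) - \<beta> * \<theta> ^ J * \<delta> (lev t)"
proof (rule ccontr)
  assume no_descent: "\<not> ?thesis"
  have small: "gp (cur (t + i)) (pt (t + i)) < \<delta> (lev (t + i))" if "i < n" for i
  proof (rule ccontr)
    assume "\<not> ?thesis"
    moreover have "lev (t + i) = lev t" using same that by simp
    ultimately have "f (pt (Suc (t + i))) \<le> f (pt (t + i)) - \<beta> * \<theta> ^ J * \<delta> (lev t)"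
      using step_descent(5)[OF pt_in_W cur_in_blocks, of "t + i" J] J by simp
    moreover have "f (pt (t + n)) \<le> f (pt (Suc (t + i)))" "f (pt (t + i)) \<le> f (pt t)"
      using that by (simp_all add: f_pt_antimono)
    ultimately show False using no_descent by linarith
  qed
  have "cnt (t + i) = cnt t + i" if "i \<le> n" for i
    using that
  proof (induction i)
    case (Suc i)
    have "lev (t + Suc i) = lev t" "lev (t + i) = lev t"
      using same[rule_format, of "Suc i"] same[rule_format, of i] Suc.prems by simp_all
    then have "lev (Suc (t + i)) = lev (t + i)" by simp
    then have "cnt (Suc (t + i)) = Suc (cnt (t + i))"
      using step_small_gap(2,3)[OF small[of i]] Suc.prems by fastforce
    then show ?case using Suc by simp
  qed simp
  then show False using run_invariant[of "t + n"] by simp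
qed

lemma level_reached: "\<exists>t. lev t = Suc l"
proof (rule ccontr)
  assume never: "\<not> ?thesis"
  have bounded: "lev t \<le> l" for t
  proof (induction t)
    case 0
    have "lev 0 = Suc 0" using run0 by simp
    then show ?case using never by (cases l) auto
  next
    case (Suc t)
    then show ?case using never[unfolded not_ex, rule_format, of "Suc t"] lev_Suc(2)[of t] by linarith
  qed
  have "incseq (\<lambda>t. lev t)" using lev_Suc(1) by (rule incseq_SucI)
  then obtain T where T: "\<And>t. T \<le> t \<Longrightarrow> lev t = lev T"
    by (rule incseq_bounded_nat_stabilizes[of "\<lambda>t. lev t" l, OF _ bounded]) blast
  obtain J where J: "armijo_exponent \<beta> \<theta> (\<delta> (lev T)) J"
    using armijo_exponent_exists \<beta> \<theta> \<delta>(1) by blast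
  define c where "c = \<beta> * \<theta> ^ J * \<delta> (lev T)"
  have c: "0 < c" using \<beta> \<theta> \<delta>(1) by (simp add: c_def)
  have decrease: "f (pt (T + k * n)) \<le> f (pt T) - real k * c" for k
  proof (induction k)
    case (Suc k)
    have "lev (T + k * n + i) = lev (T + k * n)" for i
      using T[of "T + k * n + i"] T[of "T + k * n"] by simp
    with descent_within_level[of "T + k * n"] J T[of "T + k * n"]
    have "f (pt (T + k * n + n)) \<le> f (pt (T + k * n)) - c" by (simp add: c_def)
    then show ?case using Suc by (simp add: algebra_simps)
  qed simp
  obtain m where m: "\<And>x. x \<in> W \<Longrightarrow> f m \<le> f x" using f_attains_min by blast
  obtain k :: nat where "(f (pt T) - f m) / c < real k" using reals_Archimedean2 by blast
  then have "f (pt T) - real k * c < f m" using c by (simp add: pos_divide_less_eq)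
  with decrease[of k] m[OF pt_in_W[of "T + k * n"]] show False by linarith
qed

abbreviation "z \<equiv> cpl_z st"

lemma z_in_W: "z l \<in> W"
  unfolding cpl_z_def by (rule pt_in_W)

lemma z_at_restart:
  assumes "1 \<le> l"
  obtains t where "lev t = l" "\<forall>r\<in>{1..n}. gp r (pt t) < \<delta> l" "z l = pt t"
proof -
  define t0 where "t0 = (LEAST t. lev t = Suc l)"
  have t0: "lev t0 = Suc l" unfolding t0_def using level_reached by (rule LeastI_ex)
  have "t0 \<noteq> 0"
  proof
    assume "t0 = 0"
    with t0 run0 assms show False by simp
  qed
  then obtain t where t: "t0 = Suc t" using not0_implies_Suc by blast
  have "lev t \<noteq> Suc l" using not_less_Least[of t "\<lambda>t. lev t = Suc l"] t by (simp add: t0_def)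
  then have "lev (Suc t) \<noteq> lev t" using t0 t by simp
  from restart_step[OF this] t0 t show thesis
    by (intro that[of t]) (simp_all add: cpl_z_def t0_def[symmetric])
qed

lemma z_near_optimal:
  assumes "1 \<le> l" "y \<in> W"
  shows "f (z l) \<le> f y + real n * \<delta> l"
proof -
  obtain t where "\<forall>r\<in>{1..n}. gp r (pt t) < \<delta> l" "z l = pt t"
    using z_at_restart[OF assms(1)] by blast
  then have "(\<Sum>r=1..n. gp r (z l)) \<le> (\<Sum>r=1..n. \<delta> l)"
    by (intro sum_mono) (simp add: less_imp_le)
  with f_sub_le_sum_gap[OF z_in_W[of l] assms(2)] show ?thesis by simp
qed

lemma z_limit_point_optimal:
  assumes r: "strict_mono r" and lim: "(z \<circ> r) \<longlonglongrightarrow> x"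
  shows "x \<in> W" "y \<in> W \<Longrightarrow> f x \<le> f y"
proof -
  show "x \<in> W"
    using closed_sequentially[OF compact_imp_closed[OF W_compact] _ lim] z_in_W by auto
  assume y: "y \<in> W"
  have "(\<lambda>l. f ((z \<circ> r) l)) \<longlonglongrightarrow> f x"
    using continuous_on_tendsto_compose[OF f_continuous lim] by simp
  moreover have "(\<lambda>l. f y + real n * \<delta> (r l)) \<longlonglongrightarrow> f y"
    using tendsto_add[OF tendsto_const tendsto_mult_right_zero[OF LIMSEQ_subseq_LIMSEQ[OF \<delta>(2) r]]]
    by (simp add: o_def)
  moreover have "\<forall>\<^sub>F l in sequentially. f ((z \<circ> r) l) \<le> f y + real n * \<delta> (r l)"
  proof (rule eventually_sequentiallyI[of 1])
    fix l :: nat assume "1 \<le> l"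
    then have "1 \<le> r l" using seq_suble[OF r, of l] by simp
    then show "f ((z \<circ> r) l) \<le> f y + real n * \<delta> (r l)" using z_near_optimal y by simp
  qed
  ultimately show "f x \<le> f y" by (intro tendsto_le[OF trivial_limit_sequentially])
qed

lemma f_z_tendsto_min: "(\<lambda>l. f (z l)) \<longlonglongrightarrow> (INF y\<in>W. f y)"
proof -
  obtain m where m: "m \<in> W" "\<forall>y\<in>W. f m \<le> f y" using f_attains_min by blast
  have min: "(INF y\<in>W. f y) = f m" using m by (intro cInf_eq_minimum) auto
  have lower: "\<forall>\<^sub>F l in sequentially. f m \<le> f (z l)"
    using m z_in_W by simp
  have upper: "\<forall>\<^sub>F l in sequentially. f (z l) \<le> f m + real n * \<delta> l"
    using z_near_optimal m by (intro eventually_sequentiallyI[of 1]) auto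
  have "(\<lambda>l. f m + real n * \<delta> l) \<longlonglongrightarrow> f m"
    using tendsto_add[OF tendsto_const tendsto_mult_right_zero[OF \<delta>(2)]] by simp
  from tendsto_sandwich[OF lower upper tendsto_const this] show ?thesis unfolding min .
qed

end

theorem proposition3p1:
  fixes mu :: "real^'m::finite \<Rightarrow> real" and mu' :: "real^'m \<Rightarrow> real^'m"
    and eta :: "nat \<Rightarrow> real^'m \<Rightarrow> real" and blk :: "'m \<Rightarrow> nat" and n :: nat
    and Wb :: "nat \<Rightarrow> (real^'m) set" and \<beta> \<theta> :: real and \<delta> :: "nat \<Rightarrow> real"
    and z0 :: "real^'m" and st :: "nat \<Rightarrow> nat \<times> (real^'m) \<times> nat \<times> nat"
  assumes blk: "\<forall>i. blk i \<in> {1..n}"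
    and Wb: "\<forall>s\<in>{1..n}. Wb s \<noteq> {} \<and> convex (Wb s) \<and> compact (Wb s) \<and> Wb s \<subseteq> bsub blk s"
    and mu_convex: "convex_on UNIV mu"
    and mu_grad: "\<forall>w. (mu has_derivative (\<lambda>h. inner (mu' w) h)) (at w)"
    and mu'_cont: "continuous_on UNIV mu'"
    and mu'_unif: "uniformly_continuous_on (prodset blk n Wb) mu'"
    and eta_convex: "\<forall>s\<in>{1..n}. convex_on (bsub blk s) (eta s)"
    and z0: "z0 \<in> prodset blk n Wb"
    and \<beta>: "0 < \<beta>" "\<beta> < 1" and \<theta>: "0 < \<theta>" "\<theta> < 1"
    and \<delta>: "\<forall>l. 0 < \<delta> l" "decseq \<delta>" "\<delta> \<longlonglongrightarrow> 0"
    and run0: "st 0 = (1, z0, 1, 0)"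
    and run: "\<forall>t. cpl_step mu mu' eta blk n Wb \<beta> \<theta> \<delta> (st t) (st (Suc t))"
  shows "(\<forall>l. \<exists>t. fst (st t) = Suc l)
     \<and> (\<exists>x r. strict_mono r \<and> (cpl_z st \<circ> r) \<longlonglongrightarrow> x)
     \<and> (\<forall>x r. strict_mono r \<and> (cpl_z st \<circ> r) \<longlonglongrightarrow> x \<longrightarrow>
           x \<in> prodset blk n Wb \<and>
           (\<forall>y \<in> prodset blk n Wb. fobj mu eta blk n x \<le> fobj mu eta blk n y))
     \<and> (\<lambda>l. fobj mu eta blk n (cpl_z st l))
          \<longlonglongrightarrow> (INF y \<in> prodset blk n Wb. fobj mu eta blk n y)"
proof -
  interpret cpl_run mu mu' eta blk n Wb \<beta> \<theta> \<delta> z0 st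
    using blk Wb mu_convex mu_grad mu'_unif eta_convex z0 \<beta> \<theta> \<delta>(1,3) run0 run
    by unfold_locales auto
  have "\<exists>x r. strict_mono r \<and> (z \<circ> r) \<longlonglongrightarrow> x"
    using W_compact[unfolded compact_def] z_in_W by blast
  then show ?thesis
    using level_reached z_limit_point_optimal f_z_tendsto_min by blast
qed

end
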